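(* The exponential map $f\colon\mathbb{C}\to\mathbb{C}$, $z\mapsto e^z$, is chaotic in the sense of Devaney.
   Context: Let $X\subset\mathbb{C}$ be infinite and $f\colon X\to X$ continuous. Then $f$ is chaotic in the sense of Devaney if (a) the set of periodic points of $f$ (points $x$ with $f^n(x)=x$ for some $n\geq1$, where $f^n$ is the $n$-th iterate) is dense in $X$, and (b) $f$ is topologically transitive: for all open sets $U,V\subset\mathbb{C}$ that intersect $X$, there are $z\in U\cap X$ and $n\geq 0$ with $f^n(z)\in V$. *)

theory Defs
  imports "HOL-Analysis.Analysis"
begin

definition periodic_point :: "(complex \<Rightarrow> complex) \<Rightarrow> complex \<Rightarrow> bool" where
  "periodic_point f x \<longleftrightarrow> (\<exists>n\<ge>1. (f ^^ n) x = x)"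

definition devaney_chaotic :: "complex set \<Rightarrow> (complex \<Rightarrow> complex) \<Rightarrow> bool" where
  "devaney_chaotic X f \<longleftrightarrow>
     infinite X \<and> f ` X \<subseteq> X \<and> continuous_on X f \<and>
     X \<subseteq> closure {x \<in> X. periodic_point f x} \<and>
     (\<forall>U V. open U \<and> open V \<and> U \<inter> X \<noteq> {} \<and> V \<inter> X \<noteq> {} \<longrightarrow>
        (\<exists>z\<in>U \<inter> X. \<exists>n::nat. (f ^^ n) z \<in> V))"

end

theory Submission
  imports Defs "HOL-Complex_Analysis.Complex_Analysis"
begin

text \<open>Following Misiurewicz, the heart of the proof is that for every nonempty open set
  \<open>U\<close> and every closed disc \<open>D\<close> not containing 0, some iterate \<open>exp\<^sup>n\<close> has a continuous
  inverse branch on \<open>D\<close> with values in \<open>U\<close>. Transitivity is immediate from this, and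
  taking for \<open>U\<close> the interior of \<open>D\<close> Brouwer's fixed point theorem yields a periodic
  point in \<open>D\<close>.

  To build the branch, first find a point of \<open>U\<close> whose orbit meets the real line: otherwise
  every iterate maps a disc in \<open>U\<close> into a half plane, and the Schwarz--Pick estimate bounds
  the derivative of \<open>exp\<^sup>n\<close> by the imaginary part of the orbit, which is incompatible with
  the dynamics of \<open>exp\<close>. Further along the real axis the orbit becomes large, and \<open>exp\<close>
  expands small discs there up to radius 1; the image of such a disc covers a disc around
  a point high on the imaginary axis. From discs \<open>|z - iF| \<le> F/2\<close> the map \<open>exp\<close> covers
  much higher discs of the same shape, and once \<open>F\<close> is large compared with \<open>|ln |z||\<close>
  on \<open>D\<close>, also \<open>D\<close> itself.\<close>

section \<open>Continuous inverse branches\<close>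

definition inverse_branch ::
    "('a::topological_space \<Rightarrow> 'a) \<Rightarrow> nat \<Rightarrow> 'a set \<Rightarrow> 'a set \<Rightarrow> bool" where
  "inverse_branch f n S T \<longleftrightarrow>
     (\<exists>h. continuous_on T h \<and> h ` T \<subseteq> S \<and> (\<forall>v\<in>T. (f ^^ n) (h v) = v))"

lemma inverse_branch_0: "inverse_branch f 0 S S"
  unfolding inverse_branch_def by (rule exI[of _ id]) auto

lemma inverse_branch_mono:
  "inverse_branch f n S T \<Longrightarrow> S \<subseteq> S' \<Longrightarrow> T' \<subseteq> T \<Longrightarrow> inverse_branch f n S' T'"
  unfolding inverse_branch_def by (meson continuous_on_subset image_mono order_trans subsetD)

lemma inverse_branch_trans:
  assumes "inverse_branch f n S T" "inverse_branch f k T W"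
  shows "inverse_branch f (n + k) S W"
proof -
  obtain h1 where h1: "continuous_on T h1" "h1 ` T \<subseteq> S" "\<forall>v\<in>T. (f ^^ n) (h1 v) = v"
    using assms(1) unfolding inverse_branch_def by blast
  obtain h2 where h2: "continuous_on W h2" "h2 ` W \<subseteq> T" "\<forall>v\<in>W. (f ^^ k) (h2 v) = v"
    using assms(2) unfolding inverse_branch_def by blast
  have "continuous_on W (h1 \<circ> h2)"
    using h1(1) h2(1,2) continuous_on_compose continuous_on_subset by blast
  moreover have "(h1 \<circ> h2) ` W \<subseteq> S"
    using h1(2) h2(2) by auto
  moreover have "(f ^^ (n + k)) ((h1 \<circ> h2) v) = v" if "v \<in> W" for v
    using that h1(3) h2 by (auto simp: funpow_add add.commute)
  ultimately show ?thesis
    unfolding inverse_branch_def by blast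
qed

lemma inverse_branch_imp_preimage:
  assumes "inverse_branch f n S T" "v \<in> T"
  obtains u where "u \<in> S" "(f ^^ n) u = v"
  using assms unfolding inverse_branch_def by blast

lemma inverse_branch_cball_fixed_point:
  fixes p :: "'a::euclidean_space"
  assumes "inverse_branch f n (cball p r) (cball p r)" "0 < r"
  obtains q where "q \<in> cball p r" "(f ^^ n) q = q"
proof -
  obtain h where h: "continuous_on (cball p r) h" "h ` cball p r \<subseteq> cball p r"
      "\<forall>v\<in>cball p r. (f ^^ n) (h v) = v"
    using assms(1) unfolding inverse_branch_def by blast
  obtain q where "q \<in> cball p r" "h q = q"
    using brouwer_ball[OF assms(2) h(1)] h(2) by blast
  then show ?thesis
    using that h(3) by metis
qed

section \<open>Inverse branches of the exponential between discs\<close>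

lemma norm_divide_sub_one_le:
  fixes v w :: complex
  assumes "v \<in> cball w \<rho>" "w \<noteq> 0"
  shows "norm (v / w - 1) \<le> \<rho> / norm w"
proof -
  have "v / w - 1 = (v - w) / w"
    using assms(2) by (simp add: field_simps)
  then have "norm (v / w - 1) = norm (v - w) / norm w"
    by (simp add: norm_divide)
  then show ?thesis
    using assms by (simp add: divide_right_mono dist_norm norm_minus_commute)
qed

lemma Re_divide_pos:
  fixes v w :: complex
  assumes "v \<in> cball w \<rho>" "\<rho> < norm w"
  shows "0 < Re (v / w)"
proof -
  have "0 \<le> \<rho>"
    using assms(1) mem_cball by (metis order_trans zero_le_dist)
  then have "w \<noteq> 0"
    using assms(2) by auto
  then have "norm (v / w - 1) \<le> \<rho> / norm w"
    by (rule norm_divide_sub_one_le[OF assms(1)])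
  also have "\<dots> < 1"
    using \<open>w \<noteq> 0\<close> assms(2) by (simp add: divide_less_eq)
  finally have "norm (v / w - 1) < 1" .
  then have "\<bar>Re (v / w - 1)\<bar> < 1"
    using abs_Re_le_cmod le_less_trans by blast
  then show ?thesis
    by simp
qed

lemma inverse_branch_exp_Ln:
  fixes w L :: complex
  assumes "\<rho> < norm w" "exp L = w"
    and "\<And>v. v \<in> cball w \<rho> \<Longrightarrow> L + Ln (v / w) \<in> S"
  shows "inverse_branch exp 1 S (cball w \<rho>)"
proof -
  have Re_pos: "0 < Re (v / w)" if "v \<in> cball w \<rho>" for v
    using Re_divide_pos[OF that assms(1)] .
  have "v / w \<notin> \<real>\<^sub>\<le>\<^sub>0" if "v \<in> cball w \<rho>" for v
    using Re_pos[OF that] by (auto simp: complex_nonpos_Reals_iff)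
  then have "continuous_on (cball w \<rho>) (\<lambda>v. L + Ln (v / w))"
    by (intro continuous_intros) auto
  moreover have "exp (L + Ln (v / w)) = v" if "v \<in> cball w \<rho>" for v
  proof -
    have "v / w \<noteq> 0"
      using Re_pos[OF that] by auto
    then show ?thesis
      using assms(2) by (auto simp: exp_add)
  qed
  ultimately show ?thesis
    unfolding inverse_branch_def using assms(3) by (intro exI[of _ "\<lambda>v. L + Ln (v / w)"]) auto
qed

lemma inverse_branch_exp_local:
  fixes \<zeta> :: complex
  assumes "0 < r" "r \<le> 1"
  shows "inverse_branch exp 1 (cball \<zeta> r) (cball (exp \<zeta>) (norm (exp \<zeta>) * r / 4))"
proof (rule inverse_branch_exp_Ln)
  show "norm (exp \<zeta>) * r / 4 < norm (exp \<zeta>)"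
    using assms by simp
  fix v assume "v \<in> cball (exp \<zeta>) (norm (exp \<zeta>) * r / 4)"
  then have "norm (v / exp \<zeta> - 1) \<le> (norm (exp \<zeta>) * r / 4) / norm (exp \<zeta>)"
    by (rule norm_divide_sub_one_le) simp
  then have "norm (v / exp \<zeta> - 1) \<le> r / 4"
    by simp
  then have "norm (Ln (1 + (v / exp \<zeta> - 1))) \<le> r"
    using norm_Ln_le[of "v / exp \<zeta> - 1"] assms by linarith
  then show "\<zeta> + Ln (v / exp \<zeta>) \<in> cball \<zeta> r"
    by (simp add: dist_norm)
qed simp

text \<open>Adding \<open>2\<pi>ik\<close> moves the imaginary part of a logarithm to within \<open>\<pi>\<close> of any
  prescribed value, and the real part of every logarithm of \<open>v\<close> is \<open>ln |v|\<close>; the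
  constant 6 absorbs \<open>\<pi> + \<pi>/2\<close>.\<close>
lemma inverse_branch_exp_cover:
  assumes "0 \<le> \<rho>" "\<rho> < norm w"
    and ln_norm: "\<And>v. v \<in> cball w \<rho> \<Longrightarrow> \<bar>ln (norm v) - Re c\<bar> \<le> R - 6"
  shows "inverse_branch exp 1 (cball c R) (cball w \<rho>)"
proof -
  have w: "w \<noteq> 0"
    using assms(1,2) by auto
  define k where "k = \<lfloor>(Im c - Im (Ln w)) / (2 * pi) + 1/2\<rfloor>"
  define L where "L = Ln w + (2 * of_int k * pi) * \<i>"
  have "exp ((2 * of_int k * pi) * \<i>) = 1"
    by (rule exp_integer_2pi) auto
  then have "exp L = w"
    using w by (simp add: L_def exp_add)
  moreover have Im_L: "\<bar>Im L - Im c\<bar> \<le> pi"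
  proof -
    have "\<bar>real_of_int k - (Im c - Im (Ln w)) / (2 * pi)\<bar> \<le> 1/2"
      unfolding k_def by linarith
    then have "2 * pi * \<bar>real_of_int k - (Im c - Im (Ln w)) / (2 * pi)\<bar> \<le> pi"
      by (simp add: mult_le_cancel_left_pos)
    moreover have "Im L - Im c = 2 * pi * (real_of_int k - (Im c - Im (Ln w)) / (2 * pi))"
      by (simp add: L_def field_simps)
    ultimately show ?thesis
      by (simp add: abs_mult)
  qed
  moreover have "L + Ln (v / w) \<in> cball c R" if v: "v \<in> cball w \<rho>" for v
  proof -
    have Re_pos: "0 < Re (v / w)"
      using Re_divide_pos[OF v assms(2)] .
    then have "v \<noteq> 0"
      by auto
    then have "Re (L + Ln (v / w)) = ln (norm v)"
      using w by (simp add: L_def norm_divide ln_div)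
    then have "\<bar>Re (L + Ln (v / w) - c)\<bar> \<le> R - 6"
      using ln_norm[OF v] by simp
    moreover have "\<bar>Im (L + Ln (v / w) - c)\<bar> \<le> 6"
      using Re_Ln_pos_lt_imp[OF Re_pos] Im_L pi_less_4 by simp
    ultimately have "norm (L + Ln (v / w) - c) \<le> R"
      using cmod_le[of "L + Ln (v / w) - c"] by linarith
    then show ?thesis
      by (simp add: dist_norm norm_minus_commute)
  qed
  ultimately show ?thesis
    using inverse_branch_exp_Ln[OF assms(2)] by blast
qed

lemma four_mul_le_exp:
  fixes x :: real
  assumes "7 \<le> x"
  shows "4 * x \<le> exp x"
proof -
  have "7 * x \<le> x * x"
    using assms by (intro mult_right_mono) auto
  then have "4 * x \<le> 1 + x + x\<^sup>2 / 2"
    unfolding power2_eq_square using assms by linarith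
  also have "\<dots> \<le> exp x"
    using assms by (intro exp_lower_Taylor_quadratic) auto
  finally show ?thesis .
qed

lemma ln_norm_cball_bounds:
  fixes v w :: complex
  assumes "v \<in> cball w \<rho>" "\<rho> < norm w"
  shows "ln (norm w - \<rho>) \<le> ln (norm v)" "ln (norm v) \<le> ln (norm w + \<rho>)"
proof -
  have "norm (v - w) \<le> \<rho>"
    using assms(1) by (simp add: dist_norm norm_minus_commute)
  then have "norm w - \<rho> \<le> norm v" "norm v \<le> norm w + \<rho>"
    using norm_triangle_ineq2[of w v] norm_triangle_ineq[of "v - w" w]
    by (auto simp: norm_minus_commute)
  moreover have "0 < norm w - \<rho>" "0 < norm v"
    using assms(2) \<open>norm w - \<rho> \<le> norm v\<close> by linarith+
  ultimately show "ln (norm w - \<rho>) \<le> ln (norm v)" "ln (norm v) \<le> ln (norm w + \<rho>)"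
    by (auto intro: ln_mono)
qed

lemma ln_norm_cball_half_norm:
  fixes v w :: complex
  assumes "v \<in> cball w (norm w / 2)" "w \<noteq> 0"
  shows "\<bar>ln (norm v) - ln (norm w)\<bar> \<le> 1"
proof -
  have "ln (norm w) - 1 \<le> ln (norm w) - ln 2"
    using ln_le_minus_one[of "2::real"] by simp
  also have "\<dots> = ln (norm w - norm w / 2)"
    using assms(2) by (simp add: ln_div)
  also have "\<dots> \<le> ln (norm v)"
    using ln_norm_cball_bounds(1)[OF assms(1)] assms(2) by simp
  finally have lower: "ln (norm w) - 1 \<le> ln (norm v)" .
  have "ln (norm v) \<le> ln (norm w + norm w / 2)"
    using ln_norm_cball_bounds(2)[OF assms(1)] assms(2) by simp
  also have "\<dots> = ln (norm w * (3 / 2))"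
    by (rule arg_cong[where f = ln]) simp
  also have "\<dots> = ln (norm w) + ln (3 / 2)"
    by (rule ln_mult_pos) (use assms(2) in auto)
  also have "\<dots> \<le> ln (norm w) + 1"
    using ln_le_minus_one[of "3/2::real"] by simp
  finally show ?thesis
    using lower by linarith
qed

abbreviation imaginary_disc :: "real \<Rightarrow> complex set" where
  "imaginary_disc F \<equiv> cball (\<i> * of_real F) (F / 2)"

lemma ln_norm_imaginary_disc:
  assumes "v \<in> imaginary_disc F" "0 < F"
  shows "\<bar>ln (norm v) - ln F\<bar> \<le> 1"
  using ln_norm_cball_half_norm[of v "\<i> * of_real F"] assms by (simp add: norm_mult)

lemma inverse_branch_exp_imaginary_step:
  assumes "100 \<le> F"
  shows "inverse_branch exp 1 (imaginary_disc F) (imaginary_disc (exp (F / 2 - 7)))"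
proof (rule inverse_branch_exp_cover)
  show "exp (F / 2 - 7) / 2 < norm (\<i> * of_real (exp (F / 2 - 7)))"
    by (simp add: norm_mult)
  fix v assume "v \<in> imaginary_disc (exp (F / 2 - 7))"
  then have "\<bar>ln (norm v) - (F / 2 - 7)\<bar> \<le> 1"
    using ln_norm_imaginary_disc by fastforce
  then show "\<bar>ln (norm v) - Re (\<i> * of_real F)\<bar> \<le> F / 2 - 6"
    using assms by simp
qed simp

lemma inverse_branch_exp_imaginary_climb:
  assumes "100 \<le> F"
  shows "\<exists>F' n. F + real j \<le> F' \<and> inverse_branch exp n (imaginary_disc F) (imaginary_disc F')"
proof (induction j)
  case 0
  then show ?case
    using inverse_branch_0 by auto
next
  case (Suc j)
  then obtain F' n where F': "F + real j \<le> F'"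
    and branch: "inverse_branch exp n (imaginary_disc F) (imaginary_disc F')"
    by blast
  have "100 \<le> F'"
    using F' assms by simp
  then have "inverse_branch exp (n + 1) (imaginary_disc F) (imaginary_disc (exp (F' / 2 - 7)))"
    using inverse_branch_trans[OF branch inverse_branch_exp_imaginary_step] by blast
  moreover have "F' + 1 \<le> exp (F' / 2 - 7)"
    using four_mul_le_exp[of "F' / 2 - 7"] \<open>100 \<le> F'\<close> by simp
  ultimately show ?case
    using F' by (intro exI[of _ "exp (F' / 2 - 7)"] exI[of _ "n + 1"]) simp
qed

lemma inverse_branch_exp_imaginary_to_cball:
  assumes "0 \<le> \<rho>" "\<rho> < norm w" "100 \<le> F"
  shows "\<exists>n>0. inverse_branch exp n (imaginary_disc F) (cball w \<rho>)"
proof -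
  define B where "B = \<bar>ln (norm w - \<rho>)\<bar> + \<bar>ln (norm w + \<rho>)\<bar>"
  have ln_norm: "\<bar>ln (norm v)\<bar> \<le> B" if "v \<in> cball w \<rho>" for v
    using ln_norm_cball_bounds[OF that assms(2)] unfolding B_def by linarith
  obtain j :: nat where j: "2 * B + 12 \<le> real j"
    using real_arch_simple by blast
  obtain F' n where F': "F + real j \<le> F'"
    and branch: "inverse_branch exp n (imaginary_disc F) (imaginary_disc F')"
    using inverse_branch_exp_imaginary_climb[OF assms(3)] by blast
  have "inverse_branch exp 1 (imaginary_disc F') (cball w \<rho>)"
  proof (rule inverse_branch_exp_cover[OF assms(1,2)])
    fix v assume "v \<in> cball w \<rho>"
    then show "\<bar>ln (norm v) - Re (\<i> * of_real F')\<bar> \<le> F' / 2 - 6"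
      using ln_norm F' j assms(3) by fastforce
  qed
  then have "inverse_branch exp (n + 1) (imaginary_disc F) (cball w \<rho>)"
    by (rule inverse_branch_trans[OF branch])
  then show ?thesis
    by (intro exI[of _ "n + 1"]) auto
qed

lemma inverse_branch_exp_real_to_imaginary:
  assumes "7 \<le> c"
  shows "\<exists>n F. 100 \<le> F \<and> inverse_branch exp n (cball (complex_of_real c) 1) (imaginary_disc F)"
proof -
  define E where "E = exp c"
  have E: "28 \<le> E"
    using four_mul_le_exp[OF assms] assms by (simp add: E_def)
  have "inverse_branch exp 1 (cball (complex_of_real c) 1) (cball (complex_of_real E) (E / 4))"
    using inverse_branch_exp_local[of 1 "of_real c"] by (simp add: E_def exp_of_real)
  moreover have "inverse_branch exp 1 (cball (complex_of_real E) (E / 4)) (imaginary_disc (exp E))"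
  proof (rule inverse_branch_exp_cover)
    show "exp E / 2 < norm (\<i> * of_real (exp E))"
      by (simp add: norm_mult)
    fix v assume "v \<in> imaginary_disc (exp E)"
    then have "\<bar>ln (norm v) - E\<bar> \<le> 1"
      using ln_norm_imaginary_disc by fastforce
    then show "\<bar>ln (norm v) - Re (complex_of_real E)\<bar> \<le> E / 4 - 6"
      using E by simp
  qed simp
  moreover have "100 \<le> exp E"
    using four_mul_le_exp[of E] E by simp
  ultimately show ?thesis
    using inverse_branch_trans by blast
qed

lemma inverse_branch_exp_real_step:
  assumes "7 \<le> c" "0 < d" "d \<le> 1"
  shows "inverse_branch exp 1 (cball (complex_of_real c) d)
    (cball (complex_of_real (exp c)) (7 * d))"
proof -
  have "inverse_branch exp 1 (cball (complex_of_real c) d)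
      (cball (complex_of_real (exp c)) (exp c * d / 4))"
    using inverse_branch_exp_local[OF assms(2,3), of "of_real c"] by (simp add: exp_of_real)
  moreover have "7 * d \<le> exp c * d / 4"
    using four_mul_le_exp[OF assms(1)] assms by (simp add: mult_right_mono)
  ultimately show ?thesis
    using inverse_branch_mono subset_cball by blast
qed

lemma inverse_branch_exp_real_expand:
  assumes "7 \<le> c" "0 < \<epsilon>" "\<epsilon> \<le> 1"
  shows "\<exists>c' k. 7 \<le> c' \<and>
    inverse_branch exp k (cball (complex_of_real c) \<epsilon>) (cball (complex_of_real c') 1)"
proof -
  have "\<exists>c' k. 7 \<le> c' \<and>
      inverse_branch exp k (cball (complex_of_real c) \<epsilon>)
        (cball (complex_of_real c') (min 1 (7 ^ j * \<epsilon>)))" for j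
  proof (induction j)
    case 0
    then show ?case
      using assms inverse_branch_0 by auto
  next
    case (Suc j)
    then obtain c' k where c': "7 \<le> c'"
      and branch: "inverse_branch exp k (cball (complex_of_real c) \<epsilon>)
        (cball (complex_of_real c') (min 1 (7 ^ j * \<epsilon>)))"
      by blast
    have "inverse_branch exp 1 (cball (complex_of_real c') (min 1 (7 ^ j * \<epsilon>)))
        (cball (complex_of_real (exp c')) (7 * min 1 (7 ^ j * \<epsilon>)))"
      using assms by (intro inverse_branch_exp_real_step c') auto
    then have "inverse_branch exp 1 (cball (complex_of_real c') (min 1 (7 ^ j * \<epsilon>)))
        (cball (complex_of_real (exp c')) (min 1 (7 ^ Suc j * \<epsilon>)))"
      by (rule inverse_branch_mono) (auto simp: min_def)
    moreover have "7 \<le> exp c'"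
      using four_mul_le_exp[OF c'] c' by simp
    ultimately show ?case
      using inverse_branch_trans[OF branch] by blast
  qed
  moreover obtain j where "1 / \<epsilon> < 7 ^ j"
    using real_arch_pow[of 7 "1 / \<epsilon>"] by auto
  then have "min 1 (7 ^ j * \<epsilon>) = 1"
    using assms by (simp add: field_simps)
  ultimately show ?thesis
    by metis
qed

lemma inverse_branch_exp_funpow_local:
  fixes \<zeta> :: complex
  assumes "0 < r"
  shows "\<exists>\<epsilon>>0. inverse_branch exp m (cball \<zeta> r) (cball ((exp ^^ m) \<zeta>) \<epsilon>)"
  using assms
proof (induction m arbitrary: \<zeta> r)
  case 0
  then show ?case
    using inverse_branch_0 by auto
next
  case (Suc m)
  define r' where "r' = min r 1"
  have r': "0 < r'" "r' \<le> 1"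
    using Suc.prems by (auto simp: r'_def)
  obtain \<epsilon> where "0 < \<epsilon>"
    and branch: "inverse_branch exp m (cball (exp \<zeta>) (norm (exp \<zeta>) * r' / 4))
      (cball ((exp ^^ m) (exp \<zeta>)) \<epsilon>)"
    using Suc.IH[of "norm (exp \<zeta>) * r' / 4"] r' by auto
  have "inverse_branch exp (1 + m) (cball \<zeta> r') (cball ((exp ^^ m) (exp \<zeta>)) \<epsilon>)"
    by (rule inverse_branch_trans[OF inverse_branch_exp_local[OF r'] branch])
  moreover have "cball \<zeta> r' \<subseteq> cball \<zeta> r"
    by (rule subset_cball) (simp add: r'_def)
  ultimately have "inverse_branch exp (1 + m) (cball \<zeta> r) (cball ((exp ^^ m) (exp \<zeta>)) \<epsilon>)"
    using inverse_branch_mono by blast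
  then show ?case
    using \<open>0 < \<epsilon>\<close> funpow_swap1[of exp m \<zeta>] by auto
qed

lemma funpow_exp_of_real: "(exp ^^ k) (complex_of_real t) = complex_of_real ((exp ^^ k) t)"
  by (induction k) (auto simp: exp_of_real)

lemma funpow_exp_real_ge: "t + real k \<le> (exp ^^ k) (t::real)"
proof (induction k)
  case (Suc k)
  then show ?case
    using exp_ge_add_one_self[of "(exp ^^ k) t"] by (simp only: funpow.simps o_apply of_nat_Suc)
qed simp

text \<open>From a point whose orbit becomes real: iterate along the real axis until the
  orbit exceeds 7, blow a small disc there up to radius 1 along the real axis, pass to
  the imaginary axis and climb it until the target disc is covered.\<close>
lemma inverse_branch_exp_from_real_orbit:
  fixes z :: complex
  assumes "(exp ^^ m) z \<in> \<real>" "0 < r" "0 \<le> \<rho>" "\<rho> < norm w"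
  shows "\<exists>n>0. inverse_branch exp n (cball z r) (cball w \<rho>)"
proof -
  obtain t where t: "(exp ^^ m) z = of_real t"
    using assms(1) Reals_cases by metis
  define k where "k = nat \<lceil>7 - t\<rceil>"
  define c where "c = (exp ^^ k) t"
  have c: "7 \<le> c"
    using funpow_exp_real_ge[of t k] unfolding c_def k_def by linarith
  have orbit: "(exp ^^ (k + m)) z = of_real c"
    by (simp add: funpow_add t funpow_exp_of_real c_def)
  obtain \<epsilon> where "0 < \<epsilon>"
    and branch1: "inverse_branch exp (k + m) (cball z r) (cball (complex_of_real c) \<epsilon>)"
    using inverse_branch_exp_funpow_local[OF assms(2), where \<zeta> = z and m = "k + m"] orbit by auto
  have branch1': "inverse_branch exp (k + m) (cball z r) (cball (complex_of_real c) (min \<epsilon> 1))"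
    using branch1 by (rule inverse_branch_mono) auto
  obtain c' k' where "7 \<le> c'"
    and branch2: "inverse_branch exp k' (cball (complex_of_real c) (min \<epsilon> 1))
      (cball (complex_of_real c') 1)"
    using inverse_branch_exp_real_expand[OF c, of "min \<epsilon> 1"] \<open>0 < \<epsilon>\<close> by auto
  obtain n F where "100 \<le> F"
    and branch3: "inverse_branch exp n (cball (complex_of_real c') 1) (imaginary_disc F)"
    using inverse_branch_exp_real_to_imaginary[OF \<open>7 \<le> c'\<close>] by blast
  obtain n' where "0 < n'" and branch4: "inverse_branch exp n' (imaginary_disc F) (cball w \<rho>)"
    using inverse_branch_exp_imaginary_to_cball[OF assms(3,4) \<open>100 \<le> F\<close>] by blast
  have "inverse_branch exp (k + m + k' + n + n') (cball z r) (cball w \<rho>)"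
    using inverse_branch_trans[OF inverse_branch_trans[OF inverse_branch_trans[OF branch1' branch2]
        branch3] branch4] .
  then show ?thesis
    using \<open>0 < n'\<close> by (intro exI[of _ "k + m + k' + n + n'"]) auto
qed

section \<open>The Schwarz--Pick estimate\<close>

lemma norm_Cayley_lt_one:
  fixes u b :: complex
  assumes "0 < Im u" "0 < Im b"
  shows "norm ((u - b) / (u - cnj b)) < 1"
proof -
  have "(norm (u - b))\<^sup>2 < (norm (u - cnj b))\<^sup>2"
    unfolding cmod_power2 using assms by (simp add: power2_eq_square algebra_simps)
  then have "norm (u - b) < norm (u - cnj b)"
    by (simp add: power2_less_imp_less)
  then show ?thesis
    by (simp add: norm_divide divide_less_eq)
qed

lemma Schwarz_Lemma_ball:
  assumes "0 < r" "g holomorphic_on ball a r" "g a = 0"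
    and "\<And>z. z \<in> ball a r \<Longrightarrow> norm (g z) < 1"
    and "(g has_field_derivative g') (at a)"
  shows "r * norm g' \<le> 1"
proof -
  define h where "h w = g (a + of_real r * w)" for w
  have ball: "a + of_real r * w \<in> ball a r" if "norm w < 1" for w
    using that assms(1) by (simp add: dist_norm norm_mult)
  have "(g \<circ> (\<lambda>w. a + of_real r * w)) holomorphic_on ball 0 1"
    by (rule holomorphic_on_compose_gen[OF _ assms(2)]) (auto intro!: holomorphic_intros ball)
  then have "h holomorphic_on ball 0 1"
    by (simp add: h_def[abs_def] o_def)
  moreover have "h 0 = 0"
    using assms(3) by (simp add: h_def)
  moreover have "norm (h w) < 1" if "norm w < 1" for w
    using assms(4)[OF ball[OF that]] by (simp add: h_def)
  ultimately have "norm (deriv h 0) \<le> 1"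
    using Schwarz_Lemma(2)[of h 0] by simp
  moreover have "(h has_field_derivative g' * of_real r) (at 0)"
    unfolding h_def using assms(5)
    by (auto intro!: DERIV_chain[where f = g, unfolded o_def] derivative_eq_intros)
  ultimately show ?thesis
    using DERIV_imp_deriv assms(1) by (fastforce simp: norm_mult mult.commute)
qed

text \<open>Compose with the Cayley transform \<open>u \<mapsto> (u - b) / (u - cnj b)\<close>, \<open>b = f a\<close>,
  which maps the upper half plane into the unit disc and \<open>b\<close> to 0.\<close>
lemma norm_deriv_le_Im_upper_half_plane:
  assumes "0 < r" "f holomorphic_on ball a r" "(f has_field_derivative f') (at a)"
    and Im_pos: "\<And>z. z \<in> ball a r \<Longrightarrow> 0 < Im (f z)"
  shows "norm f' \<le> 2 * Im (f a) / r"
proof -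
  define b where "b = f a"
  have "0 < Im b"
    using Im_pos assms(1) by (simp add: b_def)
  have den: "f z - cnj b \<noteq> 0" if "z \<in> ball a r" for z
    using Im_pos[OF that] \<open>0 < Im b\<close> by (auto simp: complex_eq_iff)
  have "b - cnj b = 2 * of_real (Im b) * \<i>"
    by (simp add: complex_eq_iff)
  then have norm_b: "norm (b - cnj b) = 2 * Im b" and "b - cnj b \<noteq> 0"
    using \<open>0 < Im b\<close> by (auto simp: norm_mult)
  define g where "g z = (f z - b) / (f z - cnj b)" for z
  have "g holomorphic_on ball a r"
    unfolding g_def using den by (intro holomorphic_intros assms(2)) auto
  moreover have "norm (g z) < 1" if "z \<in> ball a r" for z
    unfolding g_def using Im_pos[OF that] \<open>0 < Im b\<close> by (rule norm_Cayley_lt_one)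
  moreover have "(g has_field_derivative f' / (b - cnj b)) (at a)"
  proof -
    have "(g has_field_derivative
        (f' * (f a - cnj b) - f' * (f a - b)) / (f a - cnj b) ^ Suc (Suc 0)) (at a)"
      unfolding g_def[abs_def] using assms(3) \<open>b - cnj b \<noteq> 0\<close>
      by (intro DERIV_quotient) (auto intro!: derivative_eq_intros simp: b_def)
    moreover have "(f' * (f a - cnj b) - f' * (f a - b)) / (f a - cnj b) ^ Suc (Suc 0)
        = (f' * (b - cnj b)) / ((b - cnj b) * (b - cnj b))"
      by (simp add: b_def)
    ultimately show ?thesis
      using \<open>b - cnj b \<noteq> 0\<close> by simp
  qed
  ultimately have "r * norm (f' / (b - cnj b)) \<le> 1"
    using Schwarz_Lemma_ball[OF assms(1)] by (simp add: g_def b_def)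
  then have "r * norm f' \<le> 2 * Im b"
    using \<open>0 < Im b\<close> by (simp add: norm_divide norm_b field_simps)
  then show ?thesis
    using assms(1) by (simp add: b_def field_simps)
qed

lemma norm_deriv_le_abs_Im:
  assumes "0 < r" "f holomorphic_on ball a r" "(f has_field_derivative f') (at a)"
    and Im_nonzero: "\<And>z. z \<in> ball a r \<Longrightarrow> Im (f z) \<noteq> 0"
  shows "norm f' \<le> 2 * \<bar>Im (f a)\<bar> / r"
proof -
  have connected: "connected ((\<lambda>z. Im (f z)) ` ball a r)"
    by (intro connected_continuous_image continuous_intros holomorphic_on_imp_continuous_on assms(2))
      auto
  have "(\<forall>z\<in>ball a r. 0 < Im (f z)) \<or> (\<forall>z\<in>ball a r. Im (f z) < 0)"
  proof (rule ccontr)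
    assume "\<not> ?thesis"
    then obtain z1 z2 where z: "z1 \<in> ball a r" "z2 \<in> ball a r" "Im (f z1) \<le> 0" "0 \<le> Im (f z2)"
      by (auto simp: not_less)
    then have "0 \<in> {Im (f z1)..Im (f z2)}"
      by simp
    then have "0 \<in> (\<lambda>z. Im (f z)) ` ball a r"
      using connected_contains_Icc[OF connected] z(1,2) by blast
    then show False
      using Im_nonzero by auto
  qed
  then show ?thesis
  proof
    assume pos: "\<forall>z\<in>ball a r. 0 < Im (f z)"
    then have "0 < Im (f a)"
      using assms(1) by simp
    then show ?thesis
      using norm_deriv_le_Im_upper_half_plane[OF assms(1-3)] pos by simp
  next
    assume neg: "\<forall>z\<in>ball a r. Im (f z) < 0"
    then have "Im (f a) < 0"
      using assms(1) by simp
    moreover have "norm (- f') \<le> 2 * Im (- f a) / r"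
      using assms(1-3) neg
      by (intro norm_deriv_le_Im_upper_half_plane[where f = "\<lambda>z. - f z"])
        (auto intro: holomorphic_on_minus DERIV_minus)
    ultimately show ?thesis
      by simp
  qed
qed

section \<open>Orbits meeting the real line\<close>

lemma has_field_derivative_funpow_exp:
  "((exp ^^ n) has_field_derivative (\<Prod>j<n. exp ((exp ^^ j) z))) (at z)"
proof (induction n)
  case 0
  then show ?case
    by simp
next
  case (Suc n)
  show ?case
    using DERIV_chain'[OF Suc.IH DERIV_exp] by (simp add: mult.commute)
qed

lemma holomorphic_on_funpow_exp: "(exp ^^ n) holomorphic_on S"
  using has_field_derivative_funpow_exp
  by (metis field_differentiable_at_within field_differentiable_def holomorphic_on_def)

lemma sin_power2_le_of_cos_le_half:
  fixes y :: real
  assumes "cos y \<le> 1/2"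
  shows "(sin y)\<^sup>2 \<le> 3/4 * y\<^sup>2"
proof -
  have "(cos (y/2))\<^sup>2 \<le> 3/4"
    using cos_double_cos[of "y/2"] assms by simp
  moreover have "(sin (y/2))\<^sup>2 \<le> (y/2)\<^sup>2"
    using abs_sin_x_le_abs_x[of "y/2"] by (metis abs_ge_zero power2_abs power_mono)
  ultimately have "4 * (sin (y/2))\<^sup>2 * (cos (y/2))\<^sup>2 \<le> 4 * (y/2)\<^sup>2 * (3/4)"
    by (intro mult_mono) auto
  moreover have "(sin y)\<^sup>2 = 4 * (sin (y/2))\<^sup>2 * (cos (y/2))\<^sup>2"
    using sin_double[of "y/2"] by (simp add: power_mult_distrib)
  ultimately show ?thesis
    by (simp add: power2_eq_square)
qed

lemma decseq_frequently_contracting_small: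
  fixes s :: "nat \<Rightarrow> real"
  assumes "decseq s" and contracting: "\<And>N. \<exists>n\<ge>N. s (Suc n) \<le> q * s n"
    and "0 \<le> q" "q < 1" "0 < \<epsilon>"
  shows "\<exists>n. s n < \<epsilon>"
proof -
  have iterate: "\<exists>n. s n \<le> s 0 * q ^ k" for k
  proof (induction k)
    case (Suc k)
    then obtain n where n: "s n \<le> s 0 * q ^ k"
      by blast
    obtain n' where "n \<le> n'" "s (Suc n') \<le> q * s n'"
      using contracting by blast
    moreover have "s n' \<le> s n"
      using \<open>decseq s\<close> \<open>n \<le> n'\<close> by (simp add: decseq_def)
    ultimately have "s (Suc n') \<le> q * (s 0 * q ^ k)"
      using n \<open>0 \<le> q\<close> by (meson mult_left_mono order_trans)
    then show ?case
      by (auto simp: mult_ac)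
  qed auto
  show ?thesis
  proof (cases "s 0 \<le> 0")
    case True
    then show ?thesis
      using \<open>0 < \<epsilon>\<close> by (intro exI[of _ 0]) simp
  next
    case False
    obtain k where "q ^ k < \<epsilon> / s 0"
      using real_arch_pow_inv[of "\<epsilon> / s 0" q] False \<open>0 < \<epsilon>\<close> \<open>q < 1\<close> by auto
    then have "s 0 * q ^ k < \<epsilon>"
      using False by (simp add: field_simps)
    moreover obtain n where "s n \<le> s 0 * q ^ k"
      using iterate by blast
    ultimately show ?thesis
      by (intro exI[of _ n]) linarith
  qed
qed

text \<open>\<open>(exp\<^sup>n)'(z)\<close> has modulus \<open>exp (\<Sum>j<n. Re z\<^sub>j)\<close> along the orbit \<open>z\<^sub>j\<close>
  of \<open>z\<close>. An orbit that never meets the real line cannot have this derivative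
  dominated by a fixed multiple of \<open>|Im z\<^sub>n|\<close>.\<close>
context
  fixes z :: complex and C :: real
  assumes Im_orbit_nonzero: "\<And>n. Im ((exp ^^ n) z) \<noteq> 0"
    and orbit_derivative_dominated:
      "\<And>n. exp (\<Sum>j<n. Re ((exp ^^ j) z)) \<le> C * \<bar>Im ((exp ^^ n) z)\<bar>"
begin

lemma orbit_dominating_constant_pos: "0 < C"
proof -
  have "0 < C * \<bar>Im z\<bar>"
    using orbit_derivative_dominated[of 0] by (simp add: less_le_trans[OF exp_gt_zero])
  then show ?thesis
    using Im_orbit_nonzero[of 0] by (simp add: zero_less_mult_iff)
qed

text \<open>The ratio \<open>(Im z\<^sub>n / |(exp\<^sup>n)'(z)|)\<^sup>2\<close> stays above \<open>1/C\<^sup>2\<close> but is multiplied by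
  \<open>(sin y / y)\<^sup>2 \<le> 1\<close>, \<open>y = Im z\<^sub>n\<close>, in every step, and by at most \<open>3/4\<close> whenever
  \<open>cos y \<le> 1/2\<close>.\<close>
lemma eventually_cos_Im_orbit_gt_half: "\<exists>N. \<forall>n\<ge>N. 1/2 < cos (Im ((exp ^^ n) z))"
proof (rule ccontr)
  assume "\<not> ?thesis"
  then have frequently: "\<exists>n\<ge>N. cos (Im ((exp ^^ n) z)) \<le> 1/2" for N
    by (auto simp: not_less)
  define y where "y n = Im ((exp ^^ n) z)" for n
  define P where "P n = exp (\<Sum>j<n. Re ((exp ^^ j) z))" for n
  define s where "s n = (y n)\<^sup>2 / (P n)\<^sup>2" for n
  have y_Suc: "y (Suc n) = exp (Re ((exp ^^ n) z)) * sin (y n)" for n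
    by (simp add: y_def Im_exp)
  have P_Suc: "P (Suc n) = P n * exp (Re ((exp ^^ n) z))" for n
    by (simp add: P_def exp_add)
  have y_nonzero: "y n \<noteq> 0" for n
    using Im_orbit_nonzero by (simp add: y_def)
  have s_Suc: "s (Suc n) = s n * ((sin (y n))\<^sup>2 / (y n)\<^sup>2)" for n
    unfolding s_def y_Suc P_Suc using y_nonzero[of n] by (simp add: power_mult_distrib)
  have "decseq s"
    unfolding decseq_Suc_iff
  proof
    fix n
    have "(sin (y n))\<^sup>2 \<le> (y n)\<^sup>2"
      using abs_sin_x_le_abs_x[of "y n"] by (metis abs_ge_zero power2_abs power_mono)
    then have "(sin (y n))\<^sup>2 / (y n)\<^sup>2 \<le> 1"
      using y_nonzero[of n] by simp
    then show "s (Suc n) \<le> s n"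
      unfolding s_Suc by (rule mult_left_le) (simp add: s_def)
  qed
  moreover have "\<exists>n\<ge>N. s (Suc n) \<le> 3/4 * s n" for N
  proof -
    obtain n where "n \<ge> N" "cos (y n) \<le> 1/2"
      using frequently unfolding y_def by blast
    then have "(sin (y n))\<^sup>2 / (y n)\<^sup>2 \<le> 3/4"
      using sin_power2_le_of_cos_le_half y_nonzero[of n] by (simp add: divide_le_eq)
    then have "s (Suc n) \<le> s n * (3/4)"
      unfolding s_Suc by (rule mult_left_mono) (simp add: s_def)
    then show ?thesis
      using \<open>n \<ge> N\<close> by (auto simp: mult.commute)
  qed
  ultimately obtain n where "s n < 1 / C\<^sup>2"
    using decseq_frequently_contracting_small[of s "3/4" "1 / C\<^sup>2"] orbit_dominating_constant_pos
    by auto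
  moreover have "P n \<le> C * \<bar>y n\<bar>"
    using orbit_derivative_dominated by (simp add: P_def y_def)
  then have "(P n)\<^sup>2 \<le> (C * \<bar>y n\<bar>)\<^sup>2"
    by (rule power_mono) (simp add: P_def)
  then have "1 / C\<^sup>2 \<le> s n"
    using orbit_dominating_constant_pos by (simp add: s_def P_def field_simps)
  ultimately show False
    by simp
qed

text \<open>Eventually \<open>Re z\<^sub>n \<ge> 1/2\<close>, so the derivative grows without bound, while
  \<open>|Im z\<^sub>n\<^sub>+\<^sub>1| \<le> exp (Re z\<^sub>n)\<close> keeps it below \<open>C\<close>.\<close>
lemma Im_dominated_exp_orbit_False: False
proof -
  define x where "x n = Re ((exp ^^ n) z)" for n
  have x_Suc: "x (Suc n) = exp (x n) * cos (Im ((exp ^^ n) z))" for n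
    by (simp add: x_def Re_exp)
  obtain N where N: "\<And>n. N \<le> n \<Longrightarrow> 1/2 < cos (Im ((exp ^^ n) z))"
    using eventually_cos_Im_orbit_gt_half by blast
  have x_ge: "1/2 \<le> x n" if n: "N + 2 \<le> n" for n
  proof -
    define m where "m = n - 2"
    have m: "n = Suc (Suc m)" "N \<le> m"
      using n by (auto simp: m_def)
    have "0 < x (Suc m)"
      using N[OF m(2)] by (simp add: x_Suc)
    then have "1 * (1/2) \<le> exp (x (Suc m)) * cos (Im ((exp ^^ Suc m) z))"
      using N[of "Suc m"] m(2) by (intro mult_mono) auto
    then show ?thesis
      using m(1) by (simp add: x_Suc)
  qed
  have bounded: "(\<Sum>j<n. x j) \<le> ln C" for n
  proof -
    have "exp (\<Sum>j<n. x j) * exp (x n) \<le> C * (exp (x n) * \<bar>sin (Im ((exp ^^ n) z))\<bar>)"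
      using orbit_derivative_dominated[of "Suc n"] by (simp add: x_def exp_add Im_exp abs_mult)
    also have "\<dots> \<le> C * exp (x n)"
      using orbit_dominating_constant_pos by simp
    finally have "exp (\<Sum>j<n. x j) \<le> C"
      by simp
    then show ?thesis
      using orbit_dominating_constant_pos by (simp add: ln_ge_iff)
  qed
  have unbounded: "(\<Sum>j<N + 2. x j) + real k / 2 \<le> (\<Sum>j<N + 2 + k. x j)" for k
  proof (induction k)
    case (Suc k)
    have "(\<Sum>j<N + 2 + Suc k. x j) = (\<Sum>j<N + 2 + k. x j) + x (N + 2 + k)"
      by (simp only: add_Suc_right sum.lessThan_Suc)
    then show ?case
      unfolding of_nat_Suc add_divide_distrib using Suc.IH x_ge[of "N + 2 + k", OF le_add1] by linarith
  qed simp
  obtain k :: nat where "ln C - (\<Sum>j<N + 2. x j) < real k / 2"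
    using reals_Archimedean2[of "2 * (ln C - (\<Sum>j<N + 2. x j))"] by (auto simp: field_simps)
  then show False
    using unbounded[of k] bounded[of "N + 2 + k"] by linarith
qed

end

lemma exp_orbit_meets_reals:
  fixes z0 :: complex
  assumes "0 < \<delta>"
  shows "\<exists>z\<in>ball z0 \<delta>. \<exists>m. (exp ^^ m) z \<in> \<real>"
proof (rule ccontr)
  assume "\<not> ?thesis"
  then have Im_nonzero: "Im ((exp ^^ n) z) \<noteq> 0" if "z \<in> ball z0 \<delta>" for z n
    using that by (auto simp: complex_is_Real_iff)
  have "exp (\<Sum>j<n. Re ((exp ^^ j) z0)) \<le> 2 / \<delta> * \<bar>Im ((exp ^^ n) z0)\<bar>" for n
  proof -
    have "norm (\<Prod>j<n. exp ((exp ^^ j) z0)) \<le> 2 * \<bar>Im ((exp ^^ n) z0)\<bar> / \<delta>"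
      using Im_nonzero
      by (intro norm_deriv_le_abs_Im[OF assms holomorphic_on_funpow_exp has_field_derivative_funpow_exp])
        auto
    moreover have "norm (\<Prod>j<n. exp ((exp ^^ j) z0)) = exp (\<Sum>j<n. Re ((exp ^^ j) z0))"
      by (simp add: prod_norm[symmetric] exp_sum)
    ultimately show ?thesis
      by simp
  qed
  then show False
    using Im_dominated_exp_orbit_False[of z0 "2 / \<delta>"] Im_nonzero assms by auto
qed

lemma inverse_branch_exp_from_open:
  fixes U :: "complex set"
  assumes "open U" "U \<noteq> {}" "0 \<le> \<rho>" "\<rho> < norm w"
  shows "\<exists>n>0. inverse_branch exp n U (cball w \<rho>)"
proof -
  obtain z0 e where "0 < e" "ball z0 e \<subseteq> U"
    using assms(1,2) openE by (metis ex_in_conv)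
  then obtain z m where "z \<in> U" "(exp ^^ m) z \<in> \<real>"
    using exp_orbit_meets_reals[of e z0] by blast
  moreover obtain r where "0 < r" "cball z r \<subseteq> U"
    using open_contains_cball assms(1) \<open>z \<in> U\<close> by blast
  ultimately show ?thesis
    using inverse_branch_exp_from_real_orbit[of m z r \<rho> w] assms(3,4) inverse_branch_mono by blast
qed

lemma exists_nonzero_near:
  fixes x :: "'a::real_normed_algebra_1"
  assumes "0 < e"
  shows "\<exists>p. p \<noteq> 0 \<and> dist p x < e"
proof (cases "x = 0")
  case True
  then show ?thesis
    using assms by (intro exI[of _ "of_real (e / 2)"]) (simp add: dist_norm)
next
  case False
  then show ?thesis
    using assms by (intro exI[of _ x]) simp
qed

lemma exp_periodic_point_near:
  fixes x :: complex
  assumes "0 < e"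
  shows "\<exists>q. periodic_point exp q \<and> dist q x < e"
proof -
  obtain p where "p \<noteq> 0" "dist p x < e / 2"
    using exists_nonzero_near[of "e / 2" x] assms by auto
  define r where "r = min (norm p / 2) (e / 2)"
  have r: "0 < r" "r < norm p" "r \<le> e / 2"
    using \<open>p \<noteq> 0\<close> assms by (auto simp: r_def min_less_iff_disj)
  then obtain n where "0 < n" "inverse_branch exp n (ball p r) (cball p r)"
    using inverse_branch_exp_from_open[of "ball p r" r p] by auto
  then have "inverse_branch exp n (cball p r) (cball p r)"
    using inverse_branch_mono ball_subset_cball by blast
  then obtain q where "q \<in> cball p r" "(exp ^^ n) q = q"
    using inverse_branch_cball_fixed_point r(1) by blast
  then have "periodic_point exp q"
    unfolding periodic_point_def using \<open>0 < n\<close> by (intro exI[of _ n]) simp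
  moreover have "dist q x < e"
    using dist_triangle[of q x p] \<open>q \<in> cball p r\<close> \<open>dist p x < e / 2\<close> r(3)
    by (simp add: dist_commute)
  ultimately show ?thesis
    by blast
qed

lemma exp_topologically_transitive:
  fixes U V :: "complex set"
  assumes "open U" "open V" "U \<noteq> {}" "V \<noteq> {}"
  shows "\<exists>z\<in>U. \<exists>n. (exp ^^ n) z \<in> V"
proof -
  obtain v e where "0 < e" "ball v e \<subseteq> V"
    using assms(2,4) openE by (metis ex_in_conv)
  moreover obtain w where "w \<noteq> 0" "dist w v < e"
    using exists_nonzero_near[OF \<open>0 < e\<close>] by blast
  ultimately have "w \<in> V"
    by (auto simp: dist_commute)
  obtain n where "inverse_branch exp n U (cball w 0)"
    using inverse_branch_exp_from_open[OF assms(1,3), of 0 w] \<open>w \<noteq> 0\<close> by auto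
  then obtain u where "u \<in> U" "(exp ^^ n) u = w"
    using inverse_branch_imp_preimage[of exp n U "cball w 0" w] by auto
  then show ?thesis
    using \<open>w \<in> V\<close> by metis
qed

theorem mainTheorem2:
  shows "devaney_chaotic UNIV exp"
  unfolding devaney_chaotic_def
proof (intro conjI)
  show "infinite (UNIV :: complex set)"
    by (rule infinite_UNIV_char_0)
  show "exp ` UNIV \<subseteq> (UNIV :: complex set)"
    by simp
  show "continuous_on UNIV (exp :: complex \<Rightarrow> complex)"
    by (intro continuous_intros)
  show "UNIV \<subseteq> closure {x \<in> UNIV. periodic_point exp x}"
    using exp_periodic_point_near by (auto simp: closure_approachable)
  show "\<forall>U V :: complex set. open U \<and> open V \<and> U \<inter> UNIV \<noteq> {} \<and> V \<inter> UNIV \<noteq> {} \<longrightarrow>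
      (\<exists>z\<in>U \<inter> UNIV. \<exists>n. (exp ^^ n) z \<in> V)"
  proof (intro allI impI)
    fix U V :: "complex set"
    assume "open U \<and> open V \<and> U \<inter> UNIV \<noteq> {} \<and> V \<inter> UNIV \<noteq> {}"
    then show "\<exists>z\<in>U \<inter> UNIV. \<exists>n. (exp ^^ n) z \<in> V"
      using exp_topologically_transitive[of U V] by simp
  qed
qed

end
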